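(* Let $n,m\ge 1$ and let $\mathbf{K}_1,\dots,\mathbf{K}_m\in\mathbb{R}^{n,n}$. For any ordering of these matrices, i.e. any permutation $\pi$ of $\{1,\dots,m\}$, form the product $\mathbf{K}^{\pi}=\mathbf{K}_{\pi(m)}\mathbf{K}_{\pi(m-1)}\cdots\mathbf{K}_{\pi(1)}$, and for a fixed index $i$ define the block sensitivity of $\mathbf{K}_i$ in this product as $\mathrm{BS}_i^{\pi}=\left|\,\left|\frac{\partial\mathbf{K}^{\pi}}{\partial\mathbf{K}_i}\right|\,\right|$ (absolute value of the determinant of the Jacobian of $\mathbf{K}^\pi$ with respect to the factor $\mathbf{K}_i$, others held fixed). Then $\mathrm{BS}_i^{\pi}$ does not depend on $\pi$; that is, the block sensitivity of a factor is determined by the matrices alone and not by the position of $\mathbf{K}_i$ in the product.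
   Context: For $\mathbf{A}=(a_{i,j})\in\mathbb{R}^{p,q}$, $\operatorname{vec}(\mathbf{A})$ is the row-major vectorization $(a_{1,1},\dots,a_{1,q},\dots,a_{p,1},\dots,a_{p,q})^{\mathrm T}$. The Jacobian $\frac{\partial\mathbf{K}^{\pi}}{\partial\mathbf{K}_i}$ is the $n^2\times n^2$ Jacobian matrix of the map $\operatorname{vec}(\mathbf{X})\mapsto\operatorname{vec}(\mathbf{P}\mathbf{X}\mathbf{Q})$, where $\mathbf{P}$ is the product of the factors to the left of $\mathbf{K}_i$ in $\mathbf{K}^\pi$ and $\mathbf{Q}$ the product of the factors to its right (empty products are the identity). $|\cdot|$ denotes the determinant and the outer bars the absolute value. *)

theory Defs
  imports "HOL-Analysis.Analysis"
begin

text \<open>Vectorization of an n x n matrix, indexed by pairs (row, column).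
  The index (a,b) corresponds to position (a-1)n+b in the row-major vectorization.\<close>
definition vecm :: "real^'n^'n \<Rightarrow> real^('n \<times> 'n)" where
  "vecm X = (\<chi> ab. X $ fst ab $ snd ab)"

definition unvecm :: "real^('n \<times> 'n) \<Rightarrow> real^'n^'n" where
  "unvecm v = (\<chi> a b. v $ (a, b))"

fun ordprod :: "(nat \<Rightarrow> real^'n^'n) \<Rightarrow> (nat \<Rightarrow> nat) \<Rightarrow> nat \<Rightarrow> real^'n^'n" where
  "ordprod K \<pi> 0 = mat 1"
| "ordprod K \<pi> (Suc j) = K (\<pi> (Suc j)) ** ordprod K \<pi> j"

definition jacobian :: "(real^'a \<Rightarrow> real^'b) \<Rightarrow> real^'a \<Rightarrow> real^'a^'b" where
  "jacobian f x = matrix (frechet_derivative f (at x))"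

definition block_jacobian ::
  "(nat \<Rightarrow> real^'n^'n) \<Rightarrow> (nat \<Rightarrow> nat) \<Rightarrow> nat \<Rightarrow> nat \<Rightarrow> real^('n\<times>'n)^('n\<times>'n)" where
  "block_jacobian K \<pi> m i =
     jacobian (\<lambda>v. vecm (ordprod (K(i := unvecm v)) \<pi> m)) (vecm (K i))"

definition block_sensitivity ::
  "(nat \<Rightarrow> real^'n^'n) \<Rightarrow> (nat \<Rightarrow> nat) \<Rightarrow> nat \<Rightarrow> nat \<Rightarrow> real" where
  "block_sensitivity K \<pi> m i = \<bar>det (block_jacobian K \<pi> m i)\<bar>"

end

theory Submission
  imports Defs
begin

text \<open>As a function of the free factor \<open>X = K\<^sub>i\<close>, the product is \<open>X \<mapsto> P X Q\<close>, with \<open>P\<close> and \<open>Q\<close>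
  the products of the factors after and before \<open>K\<^sub>i\<close>. This map is linear, hence its own Jacobian,
  and is left multiplication by \<open>P\<close> composed with right multiplication by \<open>Q\<close>. Right multiplication
  by \<open>Q\<close> is conjugate under transposition to left multiplication by \<open>Q\<^sup>T\<close>, whose matrix is the
  transpose of that of left multiplication by \<open>Q\<close>. So the Jacobian determinant is \<open>\<delta>(P) \<delta>(Q)\<close>,
  where \<open>\<delta>(A)\<close> is the determinant of \<open>X \<mapsto> A X\<close>; as \<open>\<delta>\<close> is multiplicative, this equals
  \<open>\<Prod>\<^sub>j\<^sub>\<noteq>\<^sub>i \<delta>(K\<^sub>j)\<close> whatever the order of the factors.\<close>

definition vecm_lmult :: "real^'n^'n \<Rightarrow> real^('n\<times>'n) \<Rightarrow> real^('n\<times>'n)" where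
  "vecm_lmult A v = vecm (A ** unvecm v)"

definition vecm_rmult :: "real^'n^'n \<Rightarrow> real^('n\<times>'n) \<Rightarrow> real^('n\<times>'n)" where
  "vecm_rmult A v = vecm (unvecm v ** A)"

definition vecm_transpose :: "real^('n::finite\<times>'n) \<Rightarrow> real^('n\<times>'n)" where
  "vecm_transpose v = (\<chi> ab. v $ (snd ab, fst ab))"

definition lmult_det :: "real^'n^'n \<Rightarrow> real" where
  "lmult_det A = det (matrix (vecm_lmult A))"

lemma unvecm_vecm [simp]: "unvecm (vecm X) = X"
  by (simp add: unvecm_def vecm_def vec_eq_iff)

lemma vecm_unvecm [simp]: "vecm (unvecm v) = v"
  by (simp add: unvecm_def vecm_def vec_eq_iff)

lemma linear_vecm_lmult: "linear (vecm_lmult A)"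
  by (rule linearI) (auto simp: vecm_lmult_def vecm_def unvecm_def vec_eq_iff
      matrix_matrix_mult_def sum.distrib sum_distrib_left algebra_simps)

lemma linear_vecm_rmult: "linear (vecm_rmult A)"
  by (rule linearI) (auto simp: vecm_rmult_def vecm_def unvecm_def vec_eq_iff
      matrix_matrix_mult_def sum.distrib sum_distrib_left algebra_simps)

lemma linear_vecm_transpose: "linear vecm_transpose"
  by (rule linearI) (auto simp: vecm_transpose_def vec_eq_iff)

lemma vecm_transpose_involution: "vecm_transpose \<circ> vecm_transpose = id"
  by (auto simp: vecm_transpose_def vec_eq_iff)

lemma vecm_lmult_mult: "vecm_lmult (A ** B) = vecm_lmult A \<circ> vecm_lmult B"
  by (auto simp: vecm_lmult_def matrix_mul_assoc)

lemma lmult_det_mult: "lmult_det (A ** B) = lmult_det A * lmult_det B"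
  by (simp add: lmult_det_def vecm_lmult_mult linear_vecm_lmult matrix_compose det_mul)

lemma lmult_det_mat_1: "lmult_det (mat 1 :: real^'n^'n) = 1"
proof -
  have "vecm_lmult (mat 1 :: real^'n^'n) = id"
    by (auto simp: vecm_lmult_def)
  then show ?thesis
    by (simp add: lmult_det_def matrix_id_mat_1)
qed

lemma matrix_vecm_lmult_nth:
  "matrix (vecm_lmult A) $ (a, b) $ (c, d) = (if b = d then A $ a $ c else 0)"
proof -
  have "matrix (vecm_lmult A) $ (a, b) $ (c, d) = (\<Sum>k\<in>UNIV. if k = c then (if b = d then A $ a $ k else 0) else 0)"
    by (simp add: matrix_def vecm_lmult_def vecm_def unvecm_def matrix_matrix_mult_def axis_def
        if_distrib[of "(*) _"] cong: if_cong)
  then show ?thesis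
    by simp
qed

lemma matrix_vecm_lmult_transpose:
  "matrix (vecm_lmult (transpose A)) = transpose (matrix (vecm_lmult A))"
  by (simp add: vec_eq_iff matrix_vecm_lmult_nth transpose_def split_paired_all)

lemma det_matrix_involution:
  fixes f :: "real^'a \<Rightarrow> real^'a"
  assumes "linear f" and "f \<circ> f = id"
  shows "det (matrix f) * det (matrix f) = 1"
  using assms by (metis det_I det_mul matrix_compose matrix_id_mat_1)

lemma vecm_rmult_conv_lmult:
  "vecm_rmult A = vecm_transpose \<circ> vecm_lmult (transpose A) \<circ> vecm_transpose"
  by (auto simp: vecm_rmult_def vecm_lmult_def vecm_transpose_def vecm_def unvecm_def vec_eq_iff
      matrix_matrix_mult_def transpose_def mult.commute)

lemma det_matrix_vecm_rmult:
  fixes A :: "real^'n^'n"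
  shows "det (matrix (vecm_rmult A)) = lmult_det A"
proof -
  let ?T = "matrix (vecm_transpose :: real^('n\<times>'n) \<Rightarrow> _)"
  have "det ?T * det ?T = 1"
    by (rule det_matrix_involution[OF linear_vecm_transpose vecm_transpose_involution])
  then have "det (matrix (vecm_rmult A)) = det (matrix (vecm_lmult (transpose A)))"
    unfolding vecm_rmult_conv_lmult
    by (simp add: matrix_compose linear_compose linear_vecm_transpose linear_vecm_lmult det_mul)
  then show ?thesis
    by (simp add: matrix_vecm_lmult_transpose lmult_det_def)
qed

lemma det_jacobian_two_sided_mult:
  "det (jacobian (\<lambda>v. vecm (P ** unvecm v ** Q)) x) = lmult_det P * lmult_det Q"
proof -
  have f: "(\<lambda>v. vecm (P ** unvecm v ** Q)) = vecm_lmult P \<circ> vecm_rmult Q"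
    by (auto simp: vecm_lmult_def vecm_rmult_def matrix_mul_assoc)
  have lin: "linear (vecm_lmult P \<circ> vecm_rmult Q)"
    by (simp add: linear_compose linear_vecm_lmult linear_vecm_rmult)
  have "jacobian (vecm_lmult P \<circ> vecm_rmult Q) x = matrix (vecm_lmult P \<circ> vecm_rmult Q)"
    using frechet_derivative_at[OF linear_imp_has_derivative[OF lin]]
    by (simp add: jacobian_def)
  then show ?thesis
    unfolding f
    by (simp add: matrix_compose linear_vecm_lmult linear_vecm_rmult det_mul lmult_det_def
        det_matrix_vecm_rmult)
qed

lemma ordprod_cong:
  assumes "\<And>l. l \<in> {1..j} \<Longrightarrow> K (\<pi> l) = K' (\<pi> l)"
  shows "ordprod K \<pi> j = ordprod K' \<pi> j"
  using assms by (induction j) auto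

lemma ordprod_add:
  "ordprod K \<pi> (k + d) = ordprod K (\<lambda>l. \<pi> (k + l)) d ** ordprod K \<pi> k"
  by (induction d) (simp_all add: matrix_mul_assoc)

lemma lmult_det_ordprod:
  "lmult_det (ordprod K \<pi> j) = (\<Prod>l = 1..j. lmult_det (K (\<pi> l)))"
  by (induction j) (simp_all add: lmult_det_mat_1 lmult_det_mult prod.nat_ivl_Suc')

lemma ordprod_update_factor:
  assumes inj: "inj_on \<pi> {1..m}" and k: "k \<in> {1..m}"
  shows "ordprod (K(\<pi> k := X)) \<pi> m
           = ordprod K (\<lambda>l. \<pi> (k + l)) (m - k) ** X ** ordprod K \<pi> (k - 1)"
proof -
  let ?K' = "K(\<pi> k := X)"
  have other: "?K' (\<pi> l) = K (\<pi> l)" if "l \<in> {1..m}" "l \<noteq> k" for l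
    using inj_onD[OF inj _ that(1) k] that by auto
  have "ordprod ?K' \<pi> m = ordprod ?K' \<pi> (k + (m - k))"
    using k by simp
  also have "\<dots> = ordprod ?K' (\<lambda>l. \<pi> (k + l)) (m - k) ** (X ** ordprod ?K' \<pi> (k - 1))"
    unfolding ordprod_add using k by (cases k) auto
  also have "ordprod ?K' (\<lambda>l. \<pi> (k + l)) (m - k) = ordprod K (\<lambda>l. \<pi> (k + l)) (m - k)"
    using k by (intro ordprod_cong other) auto
  also have "ordprod ?K' \<pi> (k - 1) = ordprod K \<pi> (k - 1)"
    using k by (intro ordprod_cong other) auto
  finally show ?thesis
    by (simp only: matrix_mul_assoc)
qed

lemma det_block_jacobian:
  assumes inj: "inj_on \<pi> {1..m}" and i: "i \<in> \<pi> ` {1..m}"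
  shows "det (block_jacobian K \<pi> m i) = (\<Prod>x \<in> \<pi> ` {1..m} - {i}. lmult_det (K x))"
proof -
  obtain k where k: "k \<in> {1..m}" and ik: "i = \<pi> k"
    using i by blast
  have "det (block_jacobian K \<pi> m i)
          = lmult_det (ordprod K (\<lambda>l. \<pi> (k + l)) (m - k)) * lmult_det (ordprod K \<pi> (k - 1))"
    unfolding block_jacobian_def ik ordprod_update_factor[OF inj k]
    by (rule det_jacobian_two_sided_mult)
  also have "\<dots> = (\<Prod>l \<in> {k<..m} \<union> {1..<k}. lmult_det (K (\<pi> l)))"
  proof -
    have "(\<Prod>l = 1..m - k. lmult_det (K (\<pi> (k + l)))) = (\<Prod>l \<in> {k<..m}. lmult_det (K (\<pi> l)))"
      using k by (intro prod.reindex_bij_witness[of _ "\<lambda>l. l - k" "\<lambda>l. k + l"]) auto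
    moreover have "{1..k - 1} = {1..<k}"
      using k by auto
    moreover have "{k<..m} \<inter> {1..<k} = {}"
      by auto
    ultimately show ?thesis
      by (simp add: lmult_det_ordprod prod.union_disjoint)
  qed
  also have "{k<..m} \<union> {1..<k} = {1..m} - {k}"
    using k by auto
  also have "(\<Prod>l \<in> {1..m} - {k}. lmult_det (K (\<pi> l))) = (\<Prod>x \<in> \<pi> ` ({1..m} - {k}). lmult_det (K x))"
    using inj by (simp add: prod.reindex inj_on_diff)
  also have "\<pi> ` ({1..m} - {k}) = \<pi> ` {1..m} - {i}"
    using inj k ik by (simp add: inj_on_image_set_diff)
  finally show ?thesis .
qed

theorem theorem6:
  fixes K :: "nat \<Rightarrow> real^'n^'n" and m i :: nat and \<pi> \<sigma> :: "nat \<Rightarrow> nat"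
  assumes "m \<ge> 1" and "i \<in> {1..m}"
    and "\<pi> permutes {1..m}" and "\<sigma> permutes {1..m}"
  shows "block_sensitivity K \<pi> m i = block_sensitivity K \<sigma> m i"
proof -
  have "det (block_jacobian K \<rho> m i) = (\<Prod>x \<in> {1..m} - {i}. lmult_det (K x))"
    if "\<rho> permutes {1..m}" for \<rho>
    using det_block_jacobian[of \<rho> m i K] assms(2) that
    by (simp add: permutes_inj_on permutes_image)
  then show ?thesis
    unfolding block_sensitivity_def using assms(3,4) by simp
qed

end
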